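(* Let $k\ge 1$ be an integer and define $$F_k(y)=\sum_{\lambda\in\mathscr{P}} y^{\ell(\lambda)} z^{\mu_k(\lambda)} q^{|\lambda|},\qquad G_k(y)=\sum_{\lambda\in\mathscr{D}} y^{\ell(\lambda)} z^{\mu_k(\lambda)} q^{|\lambda|}.$$ Then $$F_k(y) - F_k(yq) = \frac{yzq}{(yq;q)_k}F_k(yq^k)$$ and $$G_k(y) - G_k(yq) = yzq(-yq^2;q)_{k-1}G_k(yq^k).$$
   Context: $\mathscr{P}$ is the set of all integer partitions and $\mathscr{D}$ the set of partitions into distinct parts (both including the empty partition). For a partition $\lambda$, $|\lambda|$ is the sum of its parts and $\ell(\lambda)$ its number of parts. For a positive integer $k$, the $k$-measure $\mu_k(\lambda)$ is the length of the longest subsequence of the parts of $\lambda$ (listed in weakly decreasing order) in which the difference between any two consecutive members of the subsequence is at least $k$. The $q$-Pochhammer symbol is $(A;q)_n=\prod_{j=0}^{n-1}(1-Aq^j)$. The series are regarded as formal power series (or with $|q|<1$). *)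

theory Defs
  imports "HOL-Computational_Algebra.Formal_Power_Series" "HOL-Library.Sublist"
begin

definition partitions :: "nat list set" where
  "partitions = {xs. sorted_wrt (\<ge>) xs \<and> (\<forall>x\<in>set xs. 0 < x)}"

definition distinct_partitions :: "nat list set" where
  "distinct_partitions = {xs \<in> partitions. distinct xs}"

definition kmeasure :: "nat \<Rightarrow> nat list \<Rightarrow> nat" where
  "kmeasure k xs = Max {length ys | ys. subseq ys xs \<and>
      (\<forall>i. Suc i < length ys \<longrightarrow> ys ! Suc i + k \<le> ys ! i)}"

definition qpoch :: "'a::comm_ring_1 fps \<Rightarrow> nat \<Rightarrow> 'a fps" where
  "qpoch A n = (\<Prod>j<n. 1 - A * fps_X ^ j)"

text \<open>The generating function sum over lambda in S of
  y^(length lambda) z^(mu_k lambda) q^(|lambda|), as a formal power series in q;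
  y and z may themselves be power series in q (so substitutions y := y q^m make sense).
  The n-th coefficient only involves partitions with |lambda| <= n (finitely many).\<close>
definition genfun :: "nat list set \<Rightarrow> nat \<Rightarrow> 'a::comm_ring_1 fps \<Rightarrow> 'a fps \<Rightarrow> 'a fps" where
  "genfun S k y z = Abs_fps (\<lambda>n. \<Sum>lam \<in> {lam \<in> S. sum_list lam \<le> n}.
      fps_nth (y ^ length lam * z ^ kmeasure k lam * fps_X ^ sum_list lam) n)"

definition F :: "nat \<Rightarrow> 'a::comm_ring_1 fps \<Rightarrow> 'a fps \<Rightarrow> 'a fps" where
  "F k y z = genfun partitions k y z"

definition G :: "nat \<Rightarrow> 'a::comm_ring_1 fps \<Rightarrow> 'a fps \<Rightarrow> 'a fps" where
  "G k y z = genfun distinct_partitions k y z"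

end

theory Submission
  imports Defs
begin

(*
  Shifting every part up by one is a bijection from all partitions onto those without a part 1,
  so F_k(y) - F_k(yq) (and likewise for G_k) counts the partitions containing 1.  For these the
  k-measure is one more than the k-measure of the parts exceeding k, so deleting a part j <= k
  (other than the last 1) multiplies the weight by y q^j and leaves mu_k unchanged.
  Let H_j be the partitions containing 1 and no part in {j+1..k}.  Deleting one copy of j gives
  H_j = y q^j H_j + H_(j-1) for 2 <= j <= k; in H_1, deleting the last 1 and subtracting k from
  the remaining parts leaves an arbitrary partition, so (1 - yq) H_1 = yzq F_k(yq^k).  Hence
  (yq;q)_k H_k = yzq F_k(yq^k).  With distinct parts j occurs at most once, which turns the
  recursion into H_j = (1 + y q^j) H_(j-1) and H_1 = yzq G_k(yq^k).
*)

lemma partitions_iff: "l \<in> partitions \<longleftrightarrow> sorted_wrt (\<ge>) l \<and> (\<forall>x\<in>set l. 0 < x)"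
  by (simp add: partitions_def)

lemma length_le_sum_list: "\<forall>x\<in>set xs. 0 < x \<Longrightarrow> length xs \<le> sum_list (xs :: nat list)"
  by (induction xs) auto

lemma finite_partitions_sum_list_le: "finite {l \<in> partitions. sum_list l \<le> n}"
proof (rule finite_subset)
  show "{l \<in> partitions. sum_list l \<le> n} \<subseteq> {l. set l \<subseteq> {..n} \<and> length l \<le> n}"
    using length_le_sum_list member_le_sum_list by (fastforce simp: partitions_iff)
  show "finite {l. set l \<subseteq> {..n} \<and> length l \<le> n}"
    by (rule finite_lists_length_le) simp
qed

lemma partitions_eq_if_mset_eq:
  assumes "l \<in> partitions" "m \<in> partitions" "mset l = mset m"
  shows "l = m"
proof -
  have "sort l = rev l" "sort l = rev m"
    by (rule properties_for_sort; use assms in \<open>simp add: partitions_iff sorted_wrt_rev\<close>)+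
  then show ?thesis by simp
qed

lemma remove1_in_partitions: "l \<in> partitions \<Longrightarrow> remove1 j l \<in> partitions"
  by (induction l) (auto simp: partitions_iff dest: subsetD[OF set_remove1_subset])

lemma insort_in_partitions:
  "m \<in> partitions \<Longrightarrow> 0 < j \<Longrightarrow> rev (insort j (rev m)) \<in> partitions"
  by (auto simp: partitions_iff sorted_wrt_rev sorted_insort set_insort_key)

lemma map_add_in_partitions: "m \<in> partitions \<Longrightarrow> map (\<lambda>x. x + a) m \<in> partitions"
  by (simp add: partitions_iff sorted_wrt_map)

lemma map_add_image_partitions:
  "map (\<lambda>x. x + a) ` partitions = {l \<in> partitions. \<forall>x\<in>set l. a < x}"
proof (intro equalityI subsetI)
  fix l assume "l \<in> map (\<lambda>x. x + a) ` partitions"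
  then obtain m where "m \<in> partitions" "l = map (\<lambda>x. x + a) m" by blast
  then show "l \<in> {l \<in> partitions. \<forall>x\<in>set l. a < x}"
    by (simp add: partitions_iff sorted_wrt_map)
next
  fix l assume l: "l \<in> {l \<in> partitions. \<forall>x\<in>set l. a < x}"
  then have "sorted_wrt (\<ge>) l" "\<forall>x\<in>set l. a < x"
    by (simp_all add: partitions_iff)
  then have "sorted_wrt (\<lambda>x y. y - a \<le> x - a) l"
    by (auto elim: sorted_wrt_mono_rel[rotated])
  with l have "map (\<lambda>x. x - a) l \<in> partitions"
    by (simp add: partitions_iff sorted_wrt_map)
  moreover have "map (\<lambda>x. x + a) (map (\<lambda>x. x - a) l) = l"
    unfolding map_map by (rule map_idI) (use l in auto)
  ultimately show "l \<in> map (\<lambda>x. x + a) ` partitions" by (metis image_eqI)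
qed

lemma map_add_image_distinct_partitions:
  "map (\<lambda>x. x + a) ` distinct_partitions = {l \<in> distinct_partitions. \<forall>x\<in>set l. a < x}"
proof -
  have "map (\<lambda>x. x + a) ` distinct_partitions = {l \<in> map (\<lambda>x. x + a) ` partitions. distinct l}"
    by (auto simp: distinct_partitions_def distinct_map inj_on_def)
  also have "\<dots> = {l \<in> distinct_partitions. \<forall>x\<in>set l. a < x}"
    unfolding map_add_image_partitions by (auto simp: distinct_partitions_def)
  finally show ?thesis .
qed

lemma set_remove1_disjoint_iff:
  "j \<in> set l \<Longrightarrow> j \<notin> A \<Longrightarrow> set (remove1 j l) \<inter> A = {} \<longleftrightarrow> set l \<inter> A = {}"
  by (metis disjoint_iff in_set_remove1)

lemma distinct_remove1_iff:
  "j \<in> set l \<Longrightarrow> distinct l \<longleftrightarrow> distinct (remove1 j l) \<and> j \<notin> set (remove1 j l)"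
  by (induction l) auto

lemma remove1_one_greater_iff:
  assumes "l \<in> partitions" "1 \<le> k"
  shows "(\<forall>x\<in>set (remove1 1 l). k < x) \<longleftrightarrow> 1 \<notin> set (remove1 1 l) \<and> set l \<inter> {1<..k} = {}"
proof
  assume big: "\<forall>x\<in>set (remove1 1 l). k < x"
  have "x \<notin> {1<..k}" if "x \<in> set l" for x
    using big that by (metis greaterThanAtMost_iff in_set_remove1 less_irrefl not_le)
  then show "1 \<notin> set (remove1 1 l) \<and> set l \<inter> {1<..k} = {}"
    using big \<open>1 \<le> k\<close> by auto
next
  assume none: "1 \<notin> set (remove1 1 l) \<and> set l \<inter> {1<..k} = {}"
  show "\<forall>x\<in>set (remove1 1 l). k < x"
  proof
    fix x assume "x \<in> set (remove1 1 l)"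
    then have "x \<in> set l" "x \<noteq> 1"
      using none set_remove1_subset[of 1 l] by auto
    with assms(1) none show "k < x"
      by (fastforce simp: partitions_iff)
  qed
qed

lemma bij_betw_remove1_partitions:
  assumes "0 < j" "T \<subseteq> partitions"
  shows "bij_betw (remove1 j) {l \<in> partitions. j \<in> set l \<and> remove1 j l \<in> T} T"
proof (rule bij_betw_byWitness[where f' = "\<lambda>m. rev (insort j (rev m))"])
  show "\<forall>l \<in> {l \<in> partitions. j \<in> set l \<and> remove1 j l \<in> T}. rev (insort j (rev (remove1 j l))) = l"
  proof
    fix l assume l: "l \<in> {l \<in> partitions. j \<in> set l \<and> remove1 j l \<in> T}"
    show "rev (insort j (rev (remove1 j l))) = l"
    proof (rule partitions_eq_if_mset_eq)
      show "rev (insort j (rev (remove1 j l))) \<in> partitions"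
        using l assms(1) by (simp add: insort_in_partitions remove1_in_partitions)
      show "mset (rev (insort j (rev (remove1 j l)))) = mset l"
        using l by (simp add: insert_DiffM)
    qed (use l in simp)
  qed
  have remove1_insort: "remove1 j (rev (insort j (rev m))) = m" if "m \<in> T" for m
  proof (rule partitions_eq_if_mset_eq)
    show "remove1 j (rev (insort j (rev m))) \<in> partitions"
      using that assms by (intro remove1_in_partitions insort_in_partitions) auto
  qed (use that assms in auto)
  then show "\<forall>m \<in> T. remove1 j (rev (insort j (rev m))) = m" by blast
  show "(\<lambda>m. rev (insort j (rev m))) ` T \<subseteq> {l \<in> partitions. j \<in> set l \<and> remove1 j l \<in> T}"
    using assms remove1_insort by (auto simp: set_insort_key intro: insort_in_partitions)
qed auto

lemma kmeasure_eq_Max: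
  "kmeasure k xs = Max {length ys | ys. subseq ys xs \<and> sorted_wrt (\<lambda>a b. b + k \<le> a) ys}"
proof -
  have "sorted_wrt (\<lambda>a b. b + k \<le> a) ys \<longleftrightarrow> (\<forall>i. Suc i < length ys \<longrightarrow> ys ! Suc i + k \<le> ys ! i)"
    for ys :: "nat list"
    by (rule sorted_wrt_iff_nth_Suc_transp) (auto simp: transp_def)
  then show ?thesis by (simp add: kmeasure_def)
qed

lemma finite_subseq_lengths: "finite {length ys | ys. subseq ys xs \<and> Q ys}"
  by (rule finite_subset[of _ "{..length xs}"]) (auto dest: list_emb_length)

lemma kmeasure_ge:
  "subseq ys xs \<Longrightarrow> sorted_wrt (\<lambda>a b. b + k \<le> a) ys \<Longrightarrow> length ys \<le> kmeasure k xs"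
  unfolding kmeasure_eq_Max by (rule Max_ge[OF finite_subseq_lengths]) blast

lemma kmeasure_witness:
  obtains ys where "subseq ys xs" "sorted_wrt (\<lambda>a b. b + k \<le> a) ys" "length ys = kmeasure k xs"
proof -
  let ?L = "{length ys | ys. subseq ys xs \<and> sorted_wrt (\<lambda>a b. b + k \<le> a) ys}"
  have "length [] \<in> ?L"
    by (intro CollectI exI[of _ "[]"]) simp
  then have "kmeasure k xs \<in> ?L"
    unfolding kmeasure_eq_Max by (intro Max_in[OF finite_subseq_lengths]) blast
  then obtain ys where "kmeasure k xs = length ys" "subseq ys xs" "sorted_wrt (\<lambda>a b. b + k \<le> a) ys"
    by blast
  then show ?thesis using that by simp
qed

lemma kmeasure_map_add: "kmeasure k (map (\<lambda>x. x + a) xs) = kmeasure k xs"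
proof -
  let ?sep = "sorted_wrt (\<lambda>a b. b + k \<le> a)"
  have "{length ys | ys. subseq ys (map (\<lambda>x. x + a) xs) \<and> ?sep ys} =
      {length ys | ys. subseq ys xs \<and> ?sep ys}"
  proof (intro equalityI subsetI)
    fix n assume "n \<in> {length ys | ys. subseq ys (map (\<lambda>x. x + a) xs) \<and> ?sep ys}"
    then obtain N where "n = length (nths xs N)" "?sep (map (\<lambda>x. x + a) (nths xs N))"
      by (auto simp: subseq_conv_nths nths_map)
    moreover have "subseq (nths xs N) xs"
      by (auto simp: subseq_conv_nths)
    ultimately show "n \<in> {length ys | ys. subseq ys xs \<and> ?sep ys}"
      by (auto simp: sorted_wrt_map)
  next
    fix n assume "n \<in> {length ys | ys. subseq ys xs \<and> ?sep ys}"
    then obtain ys where "n = length (map (\<lambda>x. x + a) ys)" "subseq ys xs" "?sep ys"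
      by auto
    moreover from this have "subseq (map (\<lambda>x. x + a) ys) (map (\<lambda>x. x + a) xs)"
      "?sep (map (\<lambda>x. x + a) ys)"
      by (simp_all add: subseq_map sorted_wrt_map)
    ultimately show "n \<in> {length ys | ys. subseq ys (map (\<lambda>x. x + a) xs) \<and> ?sep ys}"
      by blast
  qed
  then show ?thesis by (simp add: kmeasure_eq_Max)
qed

lemma sorted_wrt_ge_filter_append:
  "sorted_wrt (\<ge>) xs \<Longrightarrow> filter (\<lambda>x. k < x) xs @ filter (\<lambda>x. \<not> k < x) xs = (xs :: nat list)"
proof (induction xs)
  case (Cons x xs)
  show ?case
  proof (cases "k < x")
    case False
    with Cons.prems have "filter (\<lambda>y. k < y) xs = []"
      by (auto simp: filter_empty_conv)
    with Cons False show ?thesis by simp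
  qed (use Cons in simp)
qed simp

lemma set_mono_subseq: "subseq xs ys \<Longrightarrow> set xs \<subseteq> set ys"
  by (induction rule: list_emb.induct) auto

lemma kmeasure_Suc_filter:
  assumes l: "l \<in> partitions" and "1 \<in> set l" "1 \<le> k"
  shows "kmeasure k l = Suc (kmeasure k (filter (\<lambda>x. k < x) l))"
proof (rule antisym)
  obtain ys where ys: "subseq ys l" "sorted_wrt (\<lambda>a b. b + k \<le> a) ys" "length ys = kmeasure k l"
    by (rule kmeasure_witness)
  show "kmeasure k l \<le> Suc (kmeasure k (filter (\<lambda>x. k < x) l))"
  proof (cases ys rule: rev_cases)
    case (snoc zs b)
    have "0 < b"
      using l set_mono_subseq[OF ys(1)] snoc by (auto simp: partitions_iff)
    then have "\<forall>x\<in>set zs. k < x" and zs_sep: "sorted_wrt (\<lambda>a b. b + k \<le> a) zs"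
      using ys(2) snoc by (auto simp: sorted_wrt_append)
    moreover have "subseq zs l"
      using ys(1) snoc subseq_order.trans[OF subseq_rev_drop_many[OF subseq_order.refl]] by blast
    ultimately have "subseq zs (filter (\<lambda>x. k < x) l)"
      using subseq_filter[of zs l "\<lambda>x. k < x"] by (simp add: filter_id_conv)
    then show ?thesis
      using kmeasure_ge[OF _ zs_sep] ys(3) snoc by fastforce
  qed (use ys in simp)
next
  obtain zs where zs: "subseq zs (filter (\<lambda>x. k < x) l)" "sorted_wrt (\<lambda>a b. b + k \<le> a) zs"
    "length zs = kmeasure k (filter (\<lambda>x. k < x) l)"
    by (rule kmeasure_witness)
  have "subseq [1] (filter (\<lambda>x. \<not> k < x) l)"
    using assms by (simp add: subseq_singleton_left)
  then have "subseq (zs @ [1]) (filter (\<lambda>x. k < x) l @ filter (\<lambda>x. \<not> k < x) l)"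
    using zs(1) by (rule list_emb_append_mono[rotated])
  then have "subseq (zs @ [1]) l"
    using sorted_wrt_ge_filter_append l by (simp add: partitions_iff)
  moreover have "sorted_wrt (\<lambda>a b. b + k \<le> a) (zs @ [1])"
    using zs(2) set_mono_subseq[OF zs(1)] by (auto simp: sorted_wrt_append)
  ultimately show "Suc (kmeasure k (filter (\<lambda>x. k < x) l)) \<le> kmeasure k l"
    using kmeasure_ge zs(3) by fastforce
qed

definition weighted_genfun :: "nat list set \<Rightarrow> (nat list \<Rightarrow> 'a::comm_ring_1 fps) \<Rightarrow> 'a fps" where
  "weighted_genfun S c =
    Abs_fps (\<lambda>n. \<Sum>l \<in> {l \<in> S. sum_list l \<le> n}. fps_nth (c l * fps_X ^ sum_list l) n)"

lemma finite_sum_list_le: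
  "S \<subseteq> partitions \<Longrightarrow> finite {l \<in> S. sum_list l \<le> n}"
  by (rule finite_subset[OF _ finite_partitions_sum_list_le]) auto

lemma fps_nth_weighted_genfun:
  assumes "S \<subseteq> partitions" "n \<le> N"
  shows "fps_nth (weighted_genfun S c) n =
    (\<Sum>l \<in> {l \<in> S. sum_list l \<le> N}. fps_nth (c l * fps_X ^ sum_list l) n)"
  unfolding weighted_genfun_def fps_nth_Abs_fps
  by (rule sum.mono_neutral_left)
     (use assms finite_sum_list_le in \<open>auto simp: fps_X_power_mult_right_nth\<close>)

lemma mult_weighted_genfun:
  assumes "S \<subseteq> partitions"
  shows "d * weighted_genfun S c = weighted_genfun S (\<lambda>l. d * c l)"
proof (rule fps_ext)
  fix n
  let ?L = "{l \<in> S. sum_list l \<le> n}"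
  have "fps_nth (d * weighted_genfun S c) n
      = (\<Sum>i\<le>n. fps_nth d i * (\<Sum>l \<in> ?L. fps_nth (c l * fps_X ^ sum_list l) (n - i)))"
    by (simp add: fps_mult_nth atLeast0AtMost fps_nth_weighted_genfun[OF assms, of _ n])
  also have "\<dots> = (\<Sum>l \<in> ?L. \<Sum>i\<le>n. fps_nth d i * fps_nth (c l * fps_X ^ sum_list l) (n - i))"
    by (simp add: sum_distrib_left sum.swap[of _ "{..n}"])
  also have "\<dots> = fps_nth (weighted_genfun S (\<lambda>l. d * c l)) n"
    by (simp add: weighted_genfun_def fps_mult_nth atLeast0AtMost mult.assoc)
  finally show "fps_nth (d * weighted_genfun S c) n = fps_nth (weighted_genfun S (\<lambda>l. d * c l)) n" .
qed

lemma weighted_genfun_split: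
  assumes "S \<subseteq> partitions"
  shows "weighted_genfun S c = weighted_genfun {l \<in> S. Q l} c + weighted_genfun {l \<in> S. \<not> Q l} c"
proof (rule fps_ext)
  fix n
  have "{l \<in> S. sum_list l \<le> n} =
      {l \<in> {l \<in> S. Q l}. sum_list l \<le> n} \<union> {l \<in> {l \<in> S. \<not> Q l}. sum_list l \<le> n}"
    by auto
  then show "fps_nth (weighted_genfun S c) n =
      fps_nth (weighted_genfun {l \<in> S. Q l} c + weighted_genfun {l \<in> S. \<not> Q l} c) n"
    unfolding weighted_genfun_def fps_add_nth fps_nth_Abs_fps
    by (simp only:) (intro sum.union_disjoint finite_sum_list_le, use assms in auto)
qed

lemma weighted_genfun_reindex:
  assumes h: "bij_betw h S T" and "S \<subseteq> partitions" "T \<subseteq> partitions"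
    and weight: "\<And>m. m \<in> S \<Longrightarrow> c' (h m) * fps_X ^ sum_list (h m) = c m * fps_X ^ sum_list m"
  shows "weighted_genfun T c' = weighted_genfun S c"
proof (rule fps_ext)
  fix n
  define f where "f m = fps_nth (c m * fps_X ^ sum_list m) n" for m
  let ?A = "{m \<in> S. sum_list (h m) \<le> n}" and ?B = "{m \<in> S. sum_list m \<le> n}"
  have hA: "bij_betw h ?A {l \<in> T. sum_list l \<le> n}"
    using h by (auto simp: bij_betw_def inj_on_def)
  have f_h: "f m = fps_nth (c' (h m) * fps_X ^ sum_list (h m)) n" if "m \<in> S" for m
    using weight[OF that] by (simp add: f_def)
  have "fps_nth (weighted_genfun T c') n = (\<Sum>m \<in> ?A. fps_nth (c' (h m) * fps_X ^ sum_list (h m)) n)"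
    unfolding weighted_genfun_def fps_nth_Abs_fps by (rule sum.reindex_bij_betw[OF hA, symmetric])
  also have "\<dots> = sum f ?A"
    by (rule sum.cong) (auto simp: f_h)
  also have "\<dots> = sum f ?B"
  proof (rule sum.same_carrierI[where C = "?A \<union> ?B"])
    show "finite (?A \<union> ?B)"
      using bij_betw_finite[OF hA] finite_sum_list_le assms(2,3) by blast
    show "f m = 0" if "m \<in> ?A \<union> ?B - ?A" for m
      using that f_h[of m] by (auto simp: fps_X_power_mult_right_nth)
    show "f m = 0" if "m \<in> ?A \<union> ?B - ?B" for m
      using that by (auto simp: f_def fps_X_power_mult_right_nth)
  qed auto
  finally show "fps_nth (weighted_genfun T c') n = fps_nth (weighted_genfun S c) n"
    by (simp add: weighted_genfun_def f_def)
qed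

lemma weighted_genfun_add_part:
  assumes "0 < j" "T \<subseteq> partitions"
    and weight: "\<And>l. l \<in> partitions \<Longrightarrow> j \<in> set l \<Longrightarrow> remove1 j l \<in> T \<Longrightarrow> c l = d * c (remove1 j l)"
  shows "weighted_genfun {l \<in> partitions. j \<in> set l \<and> remove1 j l \<in> T} c =
    d * fps_X ^ j * weighted_genfun T c"
proof -
  have "weighted_genfun T (\<lambda>m. d * fps_X ^ j * c m) =
      weighted_genfun {l \<in> partitions. j \<in> set l \<and> remove1 j l \<in> T} c"
  proof (rule weighted_genfun_reindex[OF bij_betw_remove1_partitions[OF assms(1,2)]])
    fix l assume l: "l \<in> {l \<in> partitions. j \<in> set l \<and> remove1 j l \<in> T}"
    then have "sum_list l = j + sum_list (remove1 j l)"
      using sum_list_map_remove1[of j l "\<lambda>x. x"] by simp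
    then show "d * fps_X ^ j * c (remove1 j l) * fps_X ^ sum_list (remove1 j l) =
        c l * fps_X ^ sum_list l"
      using l weight by (simp add: power_add mult_ac)
  qed (use assms in auto)
  then show ?thesis
    using mult_weighted_genfun[OF assms(2), of "d * fps_X ^ j" c] by simp
qed

definition partition_weight :: "nat \<Rightarrow> 'a::comm_ring_1 fps \<Rightarrow> 'a fps \<Rightarrow> nat list \<Rightarrow> 'a fps" where
  "partition_weight k y z l = y ^ length l * z ^ kmeasure k l"

lemma genfun_eq_weighted_genfun: "genfun S k y z = weighted_genfun S (partition_weight k y z)"
  unfolding genfun_def weighted_genfun_def partition_weight_def ..

lemma partition_weight_remove1:
  assumes l: "l \<in> partitions" and "j \<in> set l" "j \<le> k" and one: "1 \<in> set (remove1 j l)"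
  shows "partition_weight k y z l = y * partition_weight k y z (remove1 j l)"
proof -
  have "1 \<le> k"
    using assms by (auto simp: partitions_iff)
  have "filter (\<lambda>x. k < x) (remove1 j l) = filter (\<lambda>x. k < x) l"
    using \<open>j \<le> k\<close> by (simp add: filter_remove1)
  then have "kmeasure k l = kmeasure k (remove1 j l)"
    using kmeasure_Suc_filter[OF l _ \<open>1 \<le> k\<close>]
      kmeasure_Suc_filter[OF remove1_in_partitions[OF l] one \<open>1 \<le> k\<close>] one set_remove1_subset
    by fastforce
  moreover have "length l = Suc (length (remove1 j l))"
    using \<open>j \<in> set l\<close> length_pos_if_in_set[OF \<open>j \<in> set l\<close>] by (simp add: length_remove1)
  ultimately show ?thesis
    by (simp add: partition_weight_def mult_ac)
qed

lemma partition_weight_remove1_one: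
  assumes l: "l \<in> partitions" "1 \<in> set l" "1 \<le> k" and big: "\<forall>x\<in>set (remove1 1 l). k < x"
  shows "partition_weight k y z l = y * z * partition_weight k y z (remove1 1 l)"
proof -
  have "filter (\<lambda>x. k < x) l = remove1 1 l"
    using big \<open>1 \<le> k\<close> filter_remove1[of "\<lambda>x. k < x" 1 l] by (simp add: filter_id_conv)
  then have "kmeasure k l = Suc (kmeasure k (remove1 1 l))"
    using kmeasure_Suc_filter[OF l] by simp
  moreover have "length l = Suc (length (remove1 1 l))"
    using \<open>1 \<in> set l\<close> length_pos_if_in_set[OF \<open>1 \<in> set l\<close>] by (simp add: length_remove1)
  ultimately show ?thesis
    by (simp add: partition_weight_def mult_ac)
qed

lemma weighted_genfun_map_add:
  assumes "S \<subseteq> partitions"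
  shows "weighted_genfun (map (\<lambda>x. x + a) ` S) (partition_weight k y z) =
    weighted_genfun S (partition_weight k (y * fps_X ^ a) z)"
proof (rule weighted_genfun_reindex)
  show "bij_betw (map (\<lambda>x. x + a)) S (map (\<lambda>x. x + a) ` S)"
    by (rule inj_on_imp_bij_betw) (simp add: inj_on_def)
  show "map (\<lambda>x. x + a) ` S \<subseteq> partitions"
    using assms map_add_in_partitions by blast
  fix m
  have "sum_list (map (\<lambda>x. x + a) m) = sum_list m + a * length m"
    by (simp add: sum_list_addf sum_list_triv)
  then show "partition_weight k y z (map (\<lambda>x. x + a) m) * fps_X ^ sum_list (map (\<lambda>x. x + a) m) =
      partition_weight k (y * fps_X ^ a) z m * fps_X ^ sum_list m"
    by (simp add: partition_weight_def kmeasure_map_add power_add power_mult_distrib power_mult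
        mult_ac)
qed (use assms in auto)

lemma genfun_minus_genfun_shift:
  assumes S: "S \<subseteq> partitions" and shift: "map (\<lambda>x. x + 1) ` S = {l \<in> S. \<forall>x\<in>set l. 1 < x}"
  shows "genfun S k y z - genfun S k (y * fps_X) z =
    weighted_genfun {l \<in> S. 1 \<in> set l} (partition_weight k y z)"
proof -
  have "1 \<notin> set l \<longleftrightarrow> (\<forall>x\<in>set l. 1 < x)" if "l \<in> S" for l
  proof -
    have "\<forall>x\<in>set l. 0 < x"
      using that S by (auto simp: partitions_iff)
    then show ?thesis
      by (metis One_nat_def Suc_lessI less_irrefl)
  qed
  then have "{l \<in> S. 1 \<notin> set l} = map (\<lambda>x. x + 1) ` S"
    unfolding shift by blast
  then have "weighted_genfun {l \<in> S. 1 \<notin> set l} (partition_weight k y z) = genfun S k (y * fps_X) z"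
    using weighted_genfun_map_add[OF S, of 1] by (simp add: genfun_eq_weighted_genfun)
  moreover have "genfun S k y z = weighted_genfun {l \<in> S. 1 \<in> set l} (partition_weight k y z) +
      weighted_genfun {l \<in> S. 1 \<notin> set l} (partition_weight k y z)"
    unfolding genfun_eq_weighted_genfun by (rule weighted_genfun_split[OF S])
  ultimately show ?thesis by simp
qed

definition ones_avoiding :: "nat list set \<Rightarrow> nat \<Rightarrow> nat \<Rightarrow> nat list set" where
  "ones_avoiding S j k = {l \<in> S. 1 \<in> set l \<and> set l \<inter> {j<..k} = {}}"

lemma ones_avoiding_without:
  assumes "1 \<le> j" "j \<le> k"
  shows "{l \<in> ones_avoiding S j k. j \<notin> set l} = ones_avoiding S (j - 1) k"
proof -
  have "{j - 1<..k} = insert j {j<..k}"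
    using assms by auto
  then show ?thesis
    using assms by (auto simp: ones_avoiding_def)
qed

lemma ones_avoiding_partitions_with:
  "2 \<le> j \<Longrightarrow> {l \<in> ones_avoiding partitions j k. j \<in> set l} =
    {l \<in> partitions. j \<in> set l \<and> remove1 j l \<in> ones_avoiding partitions j k}"
  by (auto simp: ones_avoiding_def remove1_in_partitions set_remove1_disjoint_iff)
     (auto simp: disjoint_iff)

lemma ones_avoiding_partitions_one_with:
  "{l \<in> ones_avoiding partitions 1 k. 1 \<in> set (remove1 1 l)} =
    {l \<in> partitions. 1 \<in> set l \<and> remove1 1 l \<in> ones_avoiding partitions 1 k}"
  by (auto simp: ones_avoiding_def remove1_in_partitions set_remove1_disjoint_iff
      dest: subsetD[OF set_remove1_subset])
     (auto simp: disjoint_iff)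

lemma ones_avoiding_partitions_one_without:
  assumes "1 \<le> k"
  shows "{l \<in> ones_avoiding partitions 1 k. 1 \<notin> set (remove1 1 l)} =
    {l \<in> partitions. 1 \<in> set l \<and> remove1 1 l \<in> map (\<lambda>x. x + k) ` partitions}"
proof -
  have "remove1 1 l \<in> map (\<lambda>x. x + k) ` partitions \<longleftrightarrow>
      1 \<notin> set (remove1 1 l) \<and> set l \<inter> {1<..k} = {}" if "l \<in> partitions" for l
    using remove1_one_greater_iff[OF that assms] that
    by (simp add: map_add_image_partitions remove1_in_partitions)
  then show ?thesis
    unfolding ones_avoiding_def by blast
qed

lemma ones_avoiding_distinct_with:
  assumes "2 \<le> j" "j \<le> k"
  shows "{l \<in> ones_avoiding distinct_partitions j k. j \<in> set l} =
    {l \<in> partitions. j \<in> set l \<and> remove1 j l \<in> ones_avoiding distinct_partitions (j - 1) k}"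
proof -
  have "remove1 j l \<in> ones_avoiding distinct_partitions (j - 1) k \<longleftrightarrow>
      l \<in> ones_avoiding distinct_partitions j k" if l: "l \<in> partitions" "j \<in> set l" for l
  proof -
    have "{j - 1<..k} = insert j {j<..k}"
      using assms by auto
    then have "set (remove1 j l) \<inter> {j - 1<..k} = {} \<longleftrightarrow>
        j \<notin> set (remove1 j l) \<and> set l \<inter> {j<..k} = {}"
      using set_remove1_disjoint_iff[OF l(2), of "{j<..k}"] by auto
    moreover have "1 \<in> set (remove1 j l) \<longleftrightarrow> 1 \<in> set l"
      using assms by simp
    ultimately show ?thesis
      using distinct_remove1_iff[OF l(2)] remove1_in_partitions[OF l(1)] l(1)
      unfolding ones_avoiding_def distinct_partitions_def by blast
  qed
  moreover have "ones_avoiding distinct_partitions j k \<subseteq> partitions"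
    by (auto simp: ones_avoiding_def distinct_partitions_def)
  ultimately show ?thesis by blast
qed

lemma ones_avoiding_distinct_one:
  assumes "1 \<le> k"
  shows "ones_avoiding distinct_partitions 1 k =
    {l \<in> partitions. 1 \<in> set l \<and> remove1 1 l \<in> map (\<lambda>x. x + k) ` distinct_partitions}"
proof -
  have "remove1 1 l \<in> map (\<lambda>x. x + k) ` distinct_partitions \<longleftrightarrow>
      distinct l \<and> set l \<inter> {1<..k} = {}" if "l \<in> partitions" "1 \<in> set l" for l
  proof -
    have "remove1 1 l \<in> map (\<lambda>x. x + k) ` distinct_partitions \<longleftrightarrow>
        distinct (remove1 1 l) \<and> (\<forall>x\<in>set (remove1 1 l). k < x)"
      using remove1_in_partitions[OF that(1)]
      unfolding map_add_image_distinct_partitions by (simp add: distinct_partitions_def)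
    then show ?thesis
      using remove1_one_greater_iff[OF that(1) assms] distinct_remove1_iff[OF that(2)] by blast
  qed
  then show ?thesis
    unfolding ones_avoiding_def distinct_partitions_def by blast
qed

lemma qpoch_Suc: "qpoch A (Suc n) = qpoch A n * (1 - A * fps_X ^ n)"
  by (simp add: qpoch_def)

lemma fps_nth_qpoch_mult_X_0: "fps_nth (qpoch (A * fps_X) n) 0 = 1"
  by (induction n) (simp_all add: qpoch_Suc qpoch_def)

lemma weighted_genfun_ones_avoiding_partitions_step:
  assumes "2 \<le> j" "j \<le> k"
  shows "(1 - y * fps_X ^ j) *
      weighted_genfun (ones_avoiding partitions j k) (partition_weight k y z) =
    weighted_genfun (ones_avoiding partitions (j - 1) k) (partition_weight k y z)"
proof -
  let ?W = "\<lambda>S. weighted_genfun S (partition_weight k y z)"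
  have sub: "ones_avoiding partitions j k \<subseteq> partitions"
    by (auto simp: ones_avoiding_def)
  have "?W (ones_avoiding partitions j k) =
      ?W {l \<in> ones_avoiding partitions j k. j \<in> set l} +
      ?W {l \<in> ones_avoiding partitions j k. j \<notin> set l}"
    by (rule weighted_genfun_split[OF sub])
  also have "?W {l \<in> ones_avoiding partitions j k. j \<in> set l} =
      y * fps_X ^ j * ?W (ones_avoiding partitions j k)"
    unfolding ones_avoiding_partitions_with[OF assms(1)]
  proof (rule weighted_genfun_add_part[OF _ sub])
    show "partition_weight k y z l = y * partition_weight k y z (remove1 j l)"
      if "l \<in> partitions" "j \<in> set l" "remove1 j l \<in> ones_avoiding partitions j k" for l
      using that assms by (intro partition_weight_remove1) (auto simp: ones_avoiding_def)
  qed (use assms in simp)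
  also have "{l \<in> ones_avoiding partitions j k. j \<notin> set l} = ones_avoiding partitions (j - 1) k"
    by (rule ones_avoiding_without) (use assms in auto)
  finally show ?thesis
    by (metis add_diff_cancel_left' left_diff_distrib mult_1)
qed

lemma weighted_genfun_ones_avoiding_partitions_one:
  assumes "1 \<le> k"
  shows "(1 - y * fps_X) * weighted_genfun (ones_avoiding partitions 1 k) (partition_weight k y z) =
    y * z * fps_X * F k (y * fps_X ^ k) z"
proof -
  let ?W = "\<lambda>S. weighted_genfun S (partition_weight k y z)"
  have sub: "ones_avoiding partitions 1 k \<subseteq> partitions"
    by (auto simp: ones_avoiding_def)
  have "?W (ones_avoiding partitions 1 k) =
      ?W {l \<in> ones_avoiding partitions 1 k. 1 \<in> set (remove1 1 l)} +
      ?W {l \<in> ones_avoiding partitions 1 k. 1 \<notin> set (remove1 1 l)}"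
    by (rule weighted_genfun_split[OF sub])
  also have "?W {l \<in> ones_avoiding partitions 1 k. 1 \<in> set (remove1 1 l)} =
      y * fps_X ^ 1 * ?W (ones_avoiding partitions 1 k)"
    unfolding ones_avoiding_partitions_one_with
  proof (rule weighted_genfun_add_part[OF _ sub])
    show "partition_weight k y z l = y * partition_weight k y z (remove1 1 l)"
      if "l \<in> partitions" "1 \<in> set l" "remove1 1 l \<in> ones_avoiding partitions 1 k" for l
      using that assms by (intro partition_weight_remove1) (auto simp: ones_avoiding_def)
  qed simp
  also have "?W {l \<in> ones_avoiding partitions 1 k. 1 \<notin> set (remove1 1 l)} =
      y * z * fps_X ^ 1 * ?W (map (\<lambda>x. x + k) ` partitions)"
    unfolding ones_avoiding_partitions_one_without[OF assms]
  proof (rule weighted_genfun_add_part)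
    show "partition_weight k y z l = y * z * partition_weight k y z (remove1 1 l)"
      if "l \<in> partitions" "1 \<in> set l" "remove1 1 l \<in> map (\<lambda>x. x + k) ` partitions" for l
      using that assms by (intro partition_weight_remove1_one) (auto simp: map_add_image_partitions)
  qed (auto intro: map_add_in_partitions)
  also have "?W (map (\<lambda>x. x + k) ` partitions) = F k (y * fps_X ^ k) z"
    by (simp add: weighted_genfun_map_add F_def genfun_eq_weighted_genfun)
  finally have "?W (ones_avoiding partitions 1 k) =
      y * fps_X * ?W (ones_avoiding partitions 1 k) + y * z * fps_X * F k (y * fps_X ^ k) z"
    unfolding power_one_right .
  then show ?thesis
    by (metis add_diff_cancel_left' left_diff_distrib mult_1)
qed

lemma qpoch_mult_weighted_genfun_ones_avoiding_partitions:
  assumes "1 \<le> j" "j \<le> k"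
  shows "qpoch (y * fps_X) j *
      weighted_genfun (ones_avoiding partitions j k) (partition_weight k y z) =
    y * z * fps_X * F k (y * fps_X ^ k) z"
  using assms
proof (induction j rule: nat_induct_at_least)
  case base
  then show ?case
    using weighted_genfun_ones_avoiding_partitions_one by (simp add: qpoch_def)
next
  case (Suc j)
  have "y * fps_X * fps_X ^ j = y * fps_X ^ Suc j"
    by (simp add: mult.assoc)
  then have "qpoch (y * fps_X) (Suc j) *
      weighted_genfun (ones_avoiding partitions (Suc j) k) (partition_weight k y z) =
      qpoch (y * fps_X) j * weighted_genfun (ones_avoiding partitions j k) (partition_weight k y z)"
    using weighted_genfun_ones_avoiding_partitions_step[of "Suc j" k y z] Suc
    by (simp add: qpoch_Suc mult.assoc)
  then show ?case
    using Suc by simp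
qed

lemma weighted_genfun_ones_avoiding_distinct_step:
  assumes "2 \<le> j" "j \<le> k"
  shows "weighted_genfun (ones_avoiding distinct_partitions j k) (partition_weight k y z) =
    (1 + y * fps_X ^ j) *
      weighted_genfun (ones_avoiding distinct_partitions (j - 1) k) (partition_weight k y z)"
proof -
  let ?W = "\<lambda>S. weighted_genfun S (partition_weight k y z)"
  have sub: "ones_avoiding distinct_partitions i k \<subseteq> partitions" for i
    by (auto simp: ones_avoiding_def distinct_partitions_def)
  have "?W (ones_avoiding distinct_partitions j k) =
      ?W {l \<in> ones_avoiding distinct_partitions j k. j \<in> set l} +
      ?W {l \<in> ones_avoiding distinct_partitions j k. j \<notin> set l}"
    by (rule weighted_genfun_split[OF sub])
  also have "?W {l \<in> ones_avoiding distinct_partitions j k. j \<in> set l} =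
      y * fps_X ^ j * ?W (ones_avoiding distinct_partitions (j - 1) k)"
    unfolding ones_avoiding_distinct_with[OF assms]
  proof (rule weighted_genfun_add_part[OF _ sub])
    show "partition_weight k y z l = y * partition_weight k y z (remove1 j l)"
      if "l \<in> partitions" "j \<in> set l"
        "remove1 j l \<in> ones_avoiding distinct_partitions (j - 1) k" for l
      using that assms by (intro partition_weight_remove1) (auto simp: ones_avoiding_def)
  qed (use assms in simp)
  also have "{l \<in> ones_avoiding distinct_partitions j k. j \<notin> set l} =
      ones_avoiding distinct_partitions (j - 1) k"
    by (rule ones_avoiding_without) (use assms in auto)
  finally show ?thesis
    by (simp add: algebra_simps)
qed

lemma weighted_genfun_ones_avoiding_distinct_one:
  assumes "1 \<le> k"
  shows "weighted_genfun (ones_avoiding distinct_partitions 1 k) (partition_weight k y z) =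
    y * z * fps_X * G k (y * fps_X ^ k) z"
proof -
  have "weighted_genfun (ones_avoiding distinct_partitions 1 k) (partition_weight k y z) =
      y * z * fps_X ^ 1 *
        weighted_genfun (map (\<lambda>x. x + k) ` distinct_partitions) (partition_weight k y z)"
    unfolding ones_avoiding_distinct_one[OF assms]
  proof (rule weighted_genfun_add_part)
    show "partition_weight k y z l = y * z * partition_weight k y z (remove1 1 l)"
      if "l \<in> partitions" "1 \<in> set l" "remove1 1 l \<in> map (\<lambda>x. x + k) ` distinct_partitions" for l
      using that assms
      by (intro partition_weight_remove1_one) (auto simp: map_add_image_distinct_partitions)
  qed (auto simp: distinct_partitions_def intro: map_add_in_partitions)
  also have "weighted_genfun (map (\<lambda>x. x + k) ` distinct_partitions) (partition_weight k y z) =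
      G k (y * fps_X ^ k) z"
    by (simp add: weighted_genfun_map_add G_def genfun_eq_weighted_genfun distinct_partitions_def)
  finally show ?thesis
    by simp
qed

lemma weighted_genfun_ones_avoiding_distinct:
  assumes "1 \<le> j" "j \<le> k"
  shows "weighted_genfun (ones_avoiding distinct_partitions j k) (partition_weight k y z) =
    y * z * fps_X * qpoch (- (y * fps_X ^ 2)) (j - 1) * G k (y * fps_X ^ k) z"
  using assms
proof (induction j rule: nat_induct_at_least)
  case base
  then show ?case
    using weighted_genfun_ones_avoiding_distinct_one by (simp add: qpoch_def)
next
  case (Suc j)
  have "1 - - (y * fps_X ^ 2) * fps_X ^ (j - 1) = 1 + y * fps_X ^ Suc j"
    using Suc.hyps by (simp add: power_add[symmetric] mult.assoc)
  then have "qpoch (- (y * fps_X ^ 2)) (Suc j - 1) =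
      (1 + y * fps_X ^ Suc j) * qpoch (- (y * fps_X ^ 2)) (j - 1)"
    using Suc.hyps qpoch_Suc[of "- (y * fps_X ^ 2)" "j - 1"] by (simp add: mult.commute)
  then show ?case
    using weighted_genfun_ones_avoiding_distinct_step[of "Suc j" k y z] Suc by (simp add: mult_ac)
qed

lemma qpoch_mult_F_minus_F_shift:
  assumes "1 \<le> k"
  shows "qpoch (y * fps_X) k * (F k y z - F k (y * fps_X) z) =
    y * z * fps_X * F k (y * fps_X ^ k) z"
proof -
  have "F k y z - F k (y * fps_X) z =
      weighted_genfun (ones_avoiding partitions k k) (partition_weight k y z)"
    unfolding F_def genfun_minus_genfun_shift[OF subset_refl map_add_image_partitions]
    by (simp add: ones_avoiding_def)
  then show ?thesis
    using qpoch_mult_weighted_genfun_ones_avoiding_partitions[OF assms order_refl] by simp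
qed

lemma G_minus_G_shift:
  assumes "1 \<le> k"
  shows "G k y z - G k (y * fps_X) z =
    y * z * fps_X * qpoch (- (y * fps_X ^ 2)) (k - 1) * G k (y * fps_X ^ k) z"
proof -
  have sub: "distinct_partitions \<subseteq> partitions"
    by (simp add: distinct_partitions_def)
  have "G k y z - G k (y * fps_X) z =
      weighted_genfun (ones_avoiding distinct_partitions k k) (partition_weight k y z)"
    unfolding G_def genfun_minus_genfun_shift[OF sub map_add_image_distinct_partitions]
    by (simp add: ones_avoiding_def)
  then show ?thesis
    using weighted_genfun_ones_avoiding_distinct[OF assms order_refl] by simp
qed

theorem lemma2p1:
  fixes k :: nat and y z :: "'a::field fps"
  assumes "k \<ge> 1"
  shows "(F k y z - F k (y * fps_X) z
           = y * z * fps_X / qpoch (y * fps_X) k * F k (y * fps_X ^ k) z)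
       \<and> (G k y z - G k (y * fps_X) z
           = y * z * fps_X * qpoch (- (y * fps_X ^ 2)) (k - 1) * G k (y * fps_X ^ k) z)"
proof
  let ?q = "qpoch (y * fps_X) k"
  have unit: "is_unit ?q"
    by (simp add: fps_nth_qpoch_mult_X_0)
  then have "F k y z - F k (y * fps_X) z = ?q * (F k y z - F k (y * fps_X) z) / ?q"
    by auto
  also have "\<dots> = y * z * fps_X * F k (y * fps_X ^ k) z / ?q"
    unfolding qpoch_mult_F_minus_F_shift[OF assms] ..
  also have "\<dots> = y * z * fps_X / ?q * F k (y * fps_X ^ k) z"
    using unit by (rule unit_div_commute[symmetric])
  finally show "F k y z - F k (y * fps_X) z = y * z * fps_X / ?q * F k (y * fps_X ^ k) z" .
  show "G k y z - G k (y * fps_X) z =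
      y * z * fps_X * qpoch (- (y * fps_X ^ 2)) (k - 1) * G k (y * fps_X ^ k) z"
    using G_minus_G_shift[OF assms] .
qed

end
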